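(* Assume $B$ is non-decreasing and unbounded. Then $H$ is local $\delta$-admissible on $\mathcal{X}$ with $\delta(t)=1/\sqrt{B(t)}$; that is, for every $\varepsilon>0$ there exist $\eta>0$ and $t_0(\varepsilon)$ such that for all $t\in\mathcal{X}$ with $t>t_0(\varepsilon)$ and all complex $w$ with $|w|\le\eta/\sqrt{B(t)}$, \[ \log\frac{H(t+w)}{H(t)}=wA(t)+\tfrac12w^2B(t)+h_t(w),\qquad |h_t(w)|\le\varepsilon|w|^2B(t). \]
   Context: Let $G(z)=\sum_{n\ge0}a_n^2z^n$ be an entire function with $a_n\ge0$, infinitely many non-zero. Put $H(t)=G(e^t)$, $A=H'/H$, $B=A'$. Choose points $t_\ell\uparrow\infty$ with $B(t_\ell)=\ell^6$ (for all $\ell$ for which this is possible) and $T_\ell=[t_\ell,t_{\ell+1}]$; $T_\ell$ is long if $t_{\ell+1}-t_\ell\ge8/\ell^2$, with interior $\mathring T_\ell=[t_\ell+2/\ell^2,\,t_{\ell+1}-2/\ell^2]$. The set of normal values is $\mathcal{X}=\bigcup_{T_\ell\text{ long}}\mathring T_\ell$. The logarithm is the branch analytic in $w$ and vanishing at $w=0$. *)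

theory Defs
  imports "HOL-Analysis.Analysis"
begin

definition Gc :: "(nat \<Rightarrow> real) \<Rightarrow> complex \<Rightarrow> complex" where
  "Gc a z = (\<Sum>n. complex_of_real ((a n)^2) * z ^ n)"

definition Gr :: "(nat \<Rightarrow> real) \<Rightarrow> real \<Rightarrow> real" where
  "Gr a x = (\<Sum>n. (a n)^2 * x ^ n)"

definition Hr :: "(nat \<Rightarrow> real) \<Rightarrow> real \<Rightarrow> real" where
  "Hr a t = Gr a (exp t)"

definition Hc :: "(nat \<Rightarrow> real) \<Rightarrow> complex \<Rightarrow> complex" where
  "Hc a s = Gc a (exp s)"

definition Afun :: "(nat \<Rightarrow> real) \<Rightarrow> real \<Rightarrow> real" where
  "Afun a t = deriv (Hr a) t / Hr a t"

definition Bfun :: "(nat \<Rightarrow> real) \<Rightarrow> real \<Rightarrow> real" where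
  "Bfun a t = deriv (Afun a) t"

definition admissible_indices :: "(nat \<Rightarrow> real) \<Rightarrow> nat set" where
  "admissible_indices a = {l. 1 \<le> l \<and> (\<exists>t. Bfun a t = real l ^ 6)}"

text \<open>Set of normal values X: union of interiors of long intervals T_l = [t_l, t_(l+1)].\<close>
definition normal_values :: "(nat \<Rightarrow> real) \<Rightarrow> (nat \<Rightarrow> real) \<Rightarrow> real set" where
  "normal_values a ts = \<Union> {{ts l + 2 / (real l)^2 .. ts (Suc l) - 2 / (real l)^2} | l.
      l \<in> admissible_indices a \<and> Suc l \<in> admissible_indices a \<and>
      ts (Suc l) - ts l \<ge> 8 / (real l)^2}"

end

theory Submission
  imports Defs
begin

(* With the weights p_n = a_n^2 e^(n t) / H(t), A(t) and B(t) are the mean and the variance of n,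
   and H(t + w) / H(t) * e^(-w A(t)) is the moment generating function of n - A(t).  Subtracting
   1 + w^2 B(t) / 2 leaves a cubic Taylor remainder, controlled by the exponential moment of
   |n - A(t)| / sqrt B(t).  That moment is bounded by the real generating function at
   s = +-1/sqrt B(t), hence (Taylor for log H) by exp (s^2 / 2 * max B) over the window
   |s| <= 1/sqrt B(t).  At a normal value this window lies in one long interval T_l, on which B
   changes at most by the factor ((l+1)/l)^6 <= 64.  The principal logarithm of the generating
   function, which stays close to 1, then gives L. *)

lemma summable_of_nat_mult_powser:
  fixes c :: "nat \<Rightarrow> 'a::{real_normed_field,banach}"
  assumes "\<And>x. summable (\<lambda>n. c n * x ^ n)"
  shows "summable (\<lambda>n. (of_nat n * c n) * x ^ n)"
proof -
  have "summable (\<lambda>n. diffs c n * x ^ n * x)"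
    using termdiff_converges_all[OF assms] by (rule summable_mult2)
  also have "(\<lambda>n. diffs c n * x ^ n * x) = (\<lambda>n. (of_nat (Suc n) * c (Suc n)) * x ^ Suc n)"
    by (auto simp: diffs_def algebra_simps)
  finally show ?thesis
    by (subst summable_Suc_iff[symmetric])
qed

lemma summable_powser_moment:
  fixes c :: "nat \<Rightarrow> 'a::{real_normed_field,banach}"
  assumes "\<And>x. summable (\<lambda>n. c n * x ^ n)"
  shows "summable (\<lambda>n. (of_nat n ^ k * c n) * x ^ n)"
proof (induction k arbitrary: x)
  case 0
  then show ?case using assms by simp
next
  case (Suc k)
  from summable_of_nat_mult_powser[OF Suc.IH] show ?case
    by (simp add: mult.assoc)
qed

definition exp_powser :: "(nat \<Rightarrow> real) \<Rightarrow> real \<Rightarrow> real" where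
  "exp_powser c t = (\<Sum>n. c n * exp t ^ n)"

lemma has_real_derivative_exp_powser:
  assumes summable: "\<And>x::real. summable (\<lambda>n. c n * x ^ n)"
  shows "(exp_powser c has_real_derivative exp_powser (\<lambda>n. real n * c n) t) (at t)"
proof -
  let ?G = "\<lambda>x::real. \<Sum>n. c n * x ^ n"
  have "(?G has_real_derivative (\<Sum>n. diffs c n * exp t ^ n)) (at (exp t))"
    by (rule termdiffs_strong_converges_everywhere[OF summable])
  from DERIV_chain2[OF this DERIV_exp]
  have "(exp_powser c has_real_derivative (\<Sum>n. diffs c n * exp t ^ n) * exp t) (at t)"
    by (simp add: exp_powser_def[abs_def])
  moreover have "(\<Sum>n. diffs c n * exp t ^ n) * exp t = exp_powser (\<lambda>n. real n * c n) t"
  proof -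
    have "(\<lambda>n. diffs c n * exp t ^ n * exp t) sums ((\<Sum>n. diffs c n * exp t ^ n) * exp t)"
      using termdiff_converges_all[OF summable] by (intro sums_mult2 summable_sums)
    also have "(\<lambda>n. diffs c n * exp t ^ n * exp t) = (\<lambda>n. (real (Suc n) * c (Suc n)) * exp t ^ Suc n)"
      by (auto simp: diffs_def algebra_simps)
    finally have "(\<lambda>n. (real n * c n) * exp t ^ n) sums ((\<Sum>n. diffs c n * exp t ^ n) * exp t)"
      using sums_Suc_imp[where f = "\<lambda>n. (real n * c n) * exp t ^ n"] by simp
    then show ?thesis
      by (simp add: exp_powser_def sums_iff)
  qed
  ultimately show ?thesis by simp
qed

lemma exp_powser_pos:
  assumes "\<And>x::real. summable (\<lambda>n. c n * x ^ n)" and "\<And>n. 0 \<le> c n" and "0 < c m"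
  shows "0 < exp_powser c t"
  unfolding exp_powser_def using assms by (intro suminf_pos2[of _ m]) auto

lemma norm_exp_sub_quadratic_le:
  fixes z :: complex
  shows "norm (exp z - 1 - z - z^2 / 2) \<le> norm z ^ 3 * exp (norm z)"
proof -
  have "exp z - 1 - z - z^2 / 2 = (\<Sum>n. inverse (fact (n + 3)) *\<^sub>R z ^ (n + 3))"
    using exp_first_terms[of z 3] by (simp add: eval_nat_numeral scaleR_conv_of_real field_simps)
  also have "norm \<dots> \<le> (\<Sum>n. norm z ^ 3 * (norm z ^ n /\<^sub>R fact n))"
  proof (rule norm_suminf_le)
    fix n
    have "inverse (fact (n + 3)) \<le> (inverse (fact n) :: real)"
      by (intro le_imp_inverse_le fact_mono) auto
    then have "inverse (fact (n + 3)) * (norm z ^ 3 * norm z ^ n)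
        \<le> inverse (fact n) * (norm z ^ 3 * norm z ^ n)"
      by (intro mult_right_mono) auto
    then show "norm (inverse (fact (n + 3)) *\<^sub>R z ^ (n + 3)) \<le> norm z ^ 3 * (norm z ^ n /\<^sub>R fact n)"
      by (simp add: norm_mult norm_power power_add field_simps)
  qed (intro summable_mult exp_converges[THEN sums_summable])
  also have "\<dots> = norm z ^ 3 * exp (norm z)"
    by (intro sums_unique[symmetric] sums_mult exp_converges)
  finally show ?thesis .
qed

lemma cube_mult_exp_le:
  fixes u x :: real
  assumes "0 \<le> u" "u \<le> 1/2" "0 \<le> x"
  shows "(u * x) ^ 3 * exp (u * x) \<le> 216 * u ^ 3 * exp x"
proof -
  have "x / 6 \<le> exp (x / 6)"
    using exp_ge_add_one_self[of "x / 6"] by linarith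
  then have "(x / 6) ^ 3 \<le> exp (x / 6) ^ 3"
    using assms by (intro power_mono) auto
  also have "exp (x / 6) ^ 3 = exp (x / 2)"
    by (simp flip: exp_of_nat_mult)
  finally have "x ^ 3 \<le> 216 * exp (x / 2)"
    by (simp add: power_divide)
  moreover have "exp (u * x) \<le> exp (x / 2)"
    using mult_right_mono[of u "1/2" x] assms by simp
  ultimately have "(u * x) ^ 3 * exp (u * x) \<le> u ^ 3 * (216 * exp (x / 2)) * exp (x / 2)"
    using assms by (simp add: power_mult_distrib mult_mono)
  also have "\<dots> = 216 * u ^ 3 * exp x"
    by (simp flip: exp_add)
  finally show ?thesis .
qed

lemma norm_Ln_sub_le:
  fixes z D :: complex and \<delta> \<eta> q :: real
  assumes approx: "norm (z - 1 - D) \<le> \<delta> * q" and D: "norm D \<le> q / 2"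
    and \<delta>: "\<delta> \<le> 1/2" and q_le: "q \<le> \<eta>^2" and \<eta>: "0 \<le> \<eta>" "\<eta> \<le> 1/2"
  shows "norm (Ln z - D) \<le> (\<delta> + \<eta>) * q" and "0 < Re z"
proof -
  have q: "0 \<le> q" using D norm_ge_zero[of D] by linarith
  have "\<eta>^2 \<le> (1/2)^2" using \<eta> by (intro power_mono) auto
  then have q4: "q \<le> 1/4" using q_le by (simp add: power_divide)
  have "norm (z - 1) \<le> norm (z - 1 - D) + norm D"
    using norm_triangle_ineq[of "z - 1 - D" D] by simp
  also have "\<dots> \<le> q" using approx D q mult_right_mono[OF \<delta> q] by simp
  finally have v: "norm (z - 1) \<le> q" .
  have "norm (Ln z - (z - 1)) \<le> norm (z - 1)^2 / (1 - norm (z - 1))"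
    using Ln_approx_linear[of "z - 1"] v q4 by simp
  also have "\<dots> \<le> q^2 / (3/4)"
    using v q4 by (intro frac_le power_mono) auto
  also have "\<dots> \<le> 2 * (q * q)"
    by (simp add: power2_eq_square)
  also have "\<dots> \<le> 2 * (\<eta>^2 * q)"
    using mult_right_mono[OF q_le q] by simp
  also have "\<dots> = (2 * \<eta>) * (\<eta> * q)"
    by (simp add: power2_eq_square)
  also have "\<dots> \<le> \<eta> * q"
    using \<eta> q mult_right_mono[of "2 * \<eta>" 1 "\<eta> * q"] by simp
  finally have "norm (Ln z - (z - 1)) \<le> \<eta> * q" .
  then have "norm (Ln z - D) \<le> \<eta> * q + \<delta> * q"
    using approx norm_triangle_ineq[of "Ln z - (z - 1)" "z - 1 - D"] by simp
  then show "norm (Ln z - D) \<le> (\<delta> + \<eta>) * q"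
    by (simp add: algebra_simps)
  have "\<bar>Re z - 1\<bar> \<le> 1/4"
    using abs_Re_le_cmod[of "z - 1"] v q4 by simp
  then show "0 < Re z" by linarith
qed

lemma summable_exp_abs_le:
  fixes p x :: "nat \<Rightarrow> real"
  assumes p_nonneg: "\<And>n. 0 \<le> p n"
    and plus: "(\<lambda>n. p n * exp (x n)) sums S" and minus: "(\<lambda>n. p n * exp (- x n)) sums T"
  shows "summable (\<lambda>n. p n * exp \<bar>x n\<bar>)" and "(\<Sum>n. p n * exp \<bar>x n\<bar>) \<le> S + T"
proof -
  have le: "p n * exp \<bar>x n\<bar> \<le> p n * exp (x n) + p n * exp (- x n)" for n
  proof -
    have "exp \<bar>x n\<bar> \<le> exp (x n) + exp (- x n)"
      by (cases "0 \<le> x n") (auto simp: add_increasing add_increasing2)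
    then show ?thesis
      using p_nonneg[of n] by (simp add: mult_left_mono flip: distrib_left)
  qed
  have sum: "(\<lambda>n. p n * exp (x n) + p n * exp (- x n)) sums (S + T)"
    using plus minus by (rule sums_add)
  show summable: "summable (\<lambda>n. p n * exp \<bar>x n\<bar>)"
    using le p_nonneg by (intro summable_comparison_test'[OF sums_summable[OF sum]]) auto
  show "(\<Sum>n. p n * exp \<bar>x n\<bar>) \<le> S + T"
    using suminf_le[OF le summable sums_summable[OF sum]] sums_unique[OF sum] by simp
qed

lemma norm_mgf_sub_quadratic_le:
  fixes p y :: "nat \<Rightarrow> real" and w \<Phi> :: complex and \<sigma> \<eta> K :: real
  assumes p_nonneg: "\<And>n. 0 \<le> p n"
    and total: "p sums 1" and mean: "(\<lambda>n. p n * y n) sums 0"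
    and variance: "(\<lambda>n. p n * (y n)^2) sums \<sigma>^2"
    and mgf: "(\<lambda>n. of_real (p n) * exp (w * of_real (y n))) sums \<Phi>"
    and abs_exp_summable: "summable (\<lambda>n. p n * exp \<bar>y n / \<sigma>\<bar>)"
    and abs_exp_le: "(\<Sum>n. p n * exp \<bar>y n / \<sigma>\<bar>) \<le> K"
    and \<sigma>: "0 < \<sigma>" and w: "cmod w * \<sigma> \<le> \<eta>" and \<eta>: "\<eta> \<le> 1/2"
  shows "norm (\<Phi> - 1 - w^2 * of_real (\<sigma>^2) / 2) \<le> 216 * K * \<eta> * (cmod w * \<sigma>)^2"
proof -
  define u where "u = cmod w * \<sigma>"
  have u: "0 \<le> u" "u \<le> \<eta>" using \<sigma> w by (auto simp: u_def)
  define z where "z n = w * of_real (y n)" for n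
  have "(\<lambda>n. complex_of_real (p n)) sums 1"
    using sums_of_real[OF total] by simp
  moreover have "(\<lambda>n. w * of_real (p n * y n)) sums 0"
    using sums_mult[OF sums_of_real[OF mean], of w] by simp
  moreover have "(\<lambda>n. w^2 / 2 * of_real (p n * (y n)^2)) sums (w^2 / 2 * of_real (\<sigma>^2))"
    by (intro sums_mult sums_of_real variance)
  ultimately have "(\<lambda>n. of_real (p n) * exp (z n) - of_real (p n) - w * of_real (p n * y n)
      - w^2 / 2 * of_real (p n * (y n)^2)) sums (\<Phi> - 1 - 0 - w^2 / 2 * of_real (\<sigma>^2))"
    using mgf unfolding z_def by (intro sums_diff)
  also have "(\<lambda>n. of_real (p n) * exp (z n) - of_real (p n) - w * of_real (p n * y n)
      - w^2 / 2 * of_real (p n * (y n)^2)) = (\<lambda>n. of_real (p n) * (exp (z n) - 1 - z n - (z n)^2 / 2))"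
    by (simp add: z_def fun_eq_iff power2_eq_square field_simps)
  finally have remainder: "(\<lambda>n. of_real (p n) * (exp (z n) - 1 - z n - (z n)^2 / 2))
      sums (\<Phi> - 1 - w^2 * of_real (\<sigma>^2) / 2)"
    by simp
  have term_le: "norm (of_real (p n) * (exp (z n) - 1 - z n - (z n)^2 / 2))
      \<le> (216 * \<eta> * u^2) * (p n * exp \<bar>y n / \<sigma>\<bar>)" for n
  proof -
    have norm_z: "norm (z n) = u * \<bar>y n / \<sigma>\<bar>"
      using \<sigma> by (simp add: z_def u_def norm_mult abs_divide)
    have "norm (of_real (p n) * (exp (z n) - 1 - z n - (z n)^2 / 2))
        \<le> p n * ((u * \<bar>y n / \<sigma>\<bar>) ^ 3 * exp (u * \<bar>y n / \<sigma>\<bar>))"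
      using norm_exp_sub_quadratic_le[of "z n"] p_nonneg[of n]
      by (simp add: norm_mult norm_z mult_left_mono)
    also have "\<dots> \<le> p n * (216 * u ^ 3 * exp \<bar>y n / \<sigma>\<bar>)"
      using cube_mult_exp_le[of u "\<bar>y n / \<sigma>\<bar>"] u \<eta> p_nonneg[of n] by (intro mult_left_mono) auto
    also have "\<dots> \<le> p n * (216 * (\<eta> * u^2) * exp \<bar>y n / \<sigma>\<bar>)"
      using mult_right_mono[OF u(2), of "u^2"] u p_nonneg[of n]
      by (intro mult_left_mono mult_right_mono) (auto simp: power3_eq_cube power2_eq_square)
    finally show ?thesis by (simp add: mult_ac)
  qed
  have "norm (\<Phi> - 1 - w^2 * of_real (\<sigma>^2) / 2) \<le> (\<Sum>n. (216 * \<eta> * u^2) * (p n * exp \<bar>y n / \<sigma>\<bar>))"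
    using norm_suminf_le[OF term_le summable_mult[OF abs_exp_summable]] sums_unique[OF remainder]
    by simp
  also have "\<dots> = (216 * \<eta> * u^2) * (\<Sum>n. p n * exp \<bar>y n / \<sigma>\<bar>)"
    using abs_exp_summable by (rule suminf_mult)
  also have "\<dots> \<le> (216 * \<eta> * u^2) * K"
    using abs_exp_le u by (intro mult_left_mono) auto
  finally show ?thesis by (simp add: u_def mult_ac)
qed

locale entire_square_series =
  fixes a :: "nat \<Rightarrow> real"
  assumes entire: "\<And>z::complex. summable (\<lambda>n. complex_of_real ((a n)^2) * z ^ n)"
    and nonzero_coeff: "\<exists>m. a m \<noteq> 0"

definition Hr_deriv :: "(nat \<Rightarrow> real) \<Rightarrow> nat \<Rightarrow> real \<Rightarrow> real" where
  "Hr_deriv a k = exp_powser (\<lambda>n. real n ^ k * (a n)^2)"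

definition Hr_weight :: "(nat \<Rightarrow> real) \<Rightarrow> real \<Rightarrow> nat \<Rightarrow> real" where
  "Hr_weight a t n = (a n)^2 * exp t ^ n / Hr a t"

definition log_expansion_at :: "(nat \<Rightarrow> real) \<Rightarrow> real \<Rightarrow> real \<Rightarrow> real \<Rightarrow> bool" where
  "log_expansion_at a \<epsilon> \<eta> t \<longleftrightarrow>
    (\<exists>L. L holomorphic_on cball 0 (\<eta> / sqrt (Bfun a t)) \<and> L 0 = 0 \<and>
      (\<forall>w \<in> cball 0 (\<eta> / sqrt (Bfun a t)).
         exp (L w) = Hc a (complex_of_real t + w) / Hc a (complex_of_real t) \<and>
         cmod (L w - (w * complex_of_real (Afun a t) + w^2 * complex_of_real (Bfun a t) / 2))
           \<le> \<epsilon> * (cmod w)^2 * Bfun a t))"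

context entire_square_series
begin

lemma summable_real_powser: "summable (\<lambda>n. (a n)^2 * x ^ n)"
proof -
  have "summable (\<lambda>n. complex_of_real ((a n)^2 * x ^ n))"
    using entire[of "of_real x"] by simp
  then show ?thesis by (simp only: summable_complex_of_real)
qed

lemma Hr_deriv_0: "Hr_deriv a 0 = Hr a"
  by (simp add: fun_eq_iff Hr_deriv_def exp_powser_def Hr_def Gr_def)

lemma has_real_derivative_Hr_deriv: "(Hr_deriv a k has_real_derivative Hr_deriv a (Suc k) t) (at t)"
  using has_real_derivative_exp_powser[OF summable_powser_moment[OF summable_real_powser], of k t]
  by (simp add: Hr_deriv_def mult.assoc)

lemma Hr_pos: "0 < Hr a t"
proof -
  obtain m where "a m \<noteq> 0" using nonzero_coeff by blast
  then have "0 < exp_powser (\<lambda>n. (a n)^2) t"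
    by (intro exp_powser_pos[of _ m] summable_real_powser) auto
  then show ?thesis by (simp flip: Hr_deriv_0 add: Hr_deriv_def)
qed

lemma Afun_eq: "Afun a t = Hr_deriv a 1 t / Hr a t"
  using DERIV_imp_deriv[OF has_real_derivative_Hr_deriv[of 0 t]]
  by (simp add: Afun_def Hr_deriv_0)

lemma
  shows Bfun_eq: "Bfun a t = Hr_deriv a 2 t / Hr a t - (Afun a t)^2"
    and has_real_derivative_Afun: "(Afun a has_real_derivative Bfun a t) (at t)"
proof -
  have "(Afun a has_real_derivative
      (Hr_deriv a 2 t * Hr a t - Hr_deriv a 1 t * Hr_deriv a 1 t) / (Hr a t * Hr a t)) (at t)"
    using DERIV_divide[OF has_real_derivative_Hr_deriv[of 1 t] has_real_derivative_Hr_deriv[of 0 t]]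
      Hr_pos[of t]
    by (simp add: Afun_eq[abs_def] Hr_deriv_0 numeral_2_eq_2)
  moreover have "(Hr_deriv a 2 t * Hr a t - Hr_deriv a 1 t * Hr_deriv a 1 t) / (Hr a t * Hr a t)
      = Hr_deriv a 2 t / Hr a t - (Afun a t)^2"
    using Hr_pos[of t] by (simp add: Afun_eq field_simps power2_eq_square)
  ultimately have deriv: "(Afun a has_real_derivative Hr_deriv a 2 t / Hr a t - (Afun a t)^2) (at t)"
    by simp
  then show "Bfun a t = Hr_deriv a 2 t / Hr a t - (Afun a t)^2"
    unfolding Bfun_def by (rule DERIV_imp_deriv)
  with deriv show "(Afun a has_real_derivative Bfun a t) (at t)"
    by simp
qed

lemma has_real_derivative_ln_Hr: "((\<lambda>x. ln (Hr a x)) has_real_derivative Afun a t) (at t)"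
  using DERIV_chain2[OF DERIV_ln[OF Hr_pos] has_real_derivative_Hr_deriv[of 0 t, unfolded Hr_deriv_0]]
  by (simp add: Afun_eq divide_inverse mult.commute)

lemma Hr_weight_nonneg: "0 \<le> Hr_weight a t n"
  using Hr_pos[of t] by (simp add: Hr_weight_def)

lemma sums_Hr_weight_moment: "(\<lambda>n. Hr_weight a t n * real n ^ k) sums (Hr_deriv a k t / Hr a t)"
proof -
  have "(\<lambda>n. (real n ^ k * (a n)^2) * exp t ^ n) sums Hr_deriv a k t"
    unfolding Hr_deriv_def exp_powser_def
    by (intro summable_sums summable_powser_moment summable_real_powser)
  from sums_divide[OF this, of "Hr a t"] show ?thesis
    by (simp add: Hr_weight_def mult_ac)
qed

lemma sums_Hr_weight: "Hr_weight a t sums 1"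
  using sums_Hr_weight_moment[of t 0] Hr_pos[of t] by (simp add: Hr_deriv_0)

lemma sums_Hr_weight_mean: "(\<lambda>n. Hr_weight a t n * real n) sums Afun a t"
  using sums_Hr_weight_moment[of t 1] by (simp add: Afun_eq)

lemma sums_Hr_weight_second_moment:
  "(\<lambda>n. Hr_weight a t n * real n ^ 2) sums (Bfun a t + (Afun a t)^2)"
  using sums_Hr_weight_moment[of t 2] by (simp add: Bfun_eq)

lemma sums_Hr_weight_centered: "(\<lambda>n. Hr_weight a t n * (real n - Afun a t)) sums 0"
  using sums_diff[OF sums_Hr_weight_mean[of t] sums_mult[OF sums_Hr_weight[of t], of "Afun a t"]]
  by (simp add: algebra_simps)

lemma sums_Hr_weight_variance: "(\<lambda>n. Hr_weight a t n * (real n - Afun a t)^2) sums Bfun a t"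
proof -
  let ?p = "Hr_weight a t" and ?A = "Afun a t"
  have "(\<lambda>n. ?p n * real n ^ 2 - 2 * ?A * (?p n * real n) + ?A^2 * ?p n)
      sums (Bfun a t + ?A^2 - 2 * ?A * ?A + ?A^2 * 1)"
    by (intro sums_add sums_diff sums_mult sums_Hr_weight_second_moment sums_Hr_weight_mean
        sums_Hr_weight)
  moreover have "(\<lambda>n. ?p n * real n ^ 2 - 2 * ?A * (?p n * real n) + ?A^2 * ?p n)
      = (\<lambda>n. ?p n * (real n - ?A)^2)"
    by (simp add: fun_eq_iff power2_eq_square algebra_simps)
  ultimately show ?thesis
    by (simp add: power2_eq_square)
qed

lemma sums_Hr_weight_exp_centered:
  "(\<lambda>n. Hr_weight a t n * exp (s * (real n - Afun a t)))
     sums (Hr a (t + s) / Hr a t * exp (- s * Afun a t))"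
proof -
  have "(\<lambda>n. (a n)^2 * exp (t + s) ^ n) sums Hr a (t + s)"
    unfolding Hr_def Gr_def by (intro summable_sums summable_real_powser)
  from sums_mult2[OF this, of "exp (- s * Afun a t) / Hr a t"]
  have "(\<lambda>n. (a n)^2 * exp (t + s) ^ n * (exp (- s * Afun a t) / Hr a t))
      sums (Hr a (t + s) / Hr a t * exp (- s * Afun a t))"
    by simp
  moreover have "(a n)^2 * exp (t + s) ^ n * (exp (- s * Afun a t) / Hr a t)
      = Hr_weight a t n * exp (s * (real n - Afun a t))" for n
  proof -
    have "exp (s * (real n - Afun a t)) = exp s ^ n * exp (- s * Afun a t)"
      by (simp add: right_diff_distrib exp_diff exp_minus exp_of_nat2_mult field_simps)
    then show ?thesis
      by (simp add: Hr_weight_def exp_add power_mult_distrib)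
  qed
  ultimately show ?thesis by simp
qed

lemma sums_Hr_weight_cexp_centered:
  "(\<lambda>n. of_real (Hr_weight a t n) * exp (w * of_real (real n - Afun a t)))
     sums (Hc a (of_real t + w) / of_real (Hr a t) * exp (- w * of_real (Afun a t)))"
proof -
  have "(\<lambda>n. of_real ((a n)^2) * exp (of_real t + w) ^ n) sums Hc a (of_real t + w)"
    unfolding Hc_def Gc_def by (intro summable_sums entire)
  from sums_mult2[OF this, of "exp (- w * of_real (Afun a t)) / of_real (Hr a t)"]
  have "(\<lambda>n. of_real ((a n)^2) * exp (of_real t + w) ^ n * (exp (- w * of_real (Afun a t)) / of_real (Hr a t)))
      sums (Hc a (of_real t + w) / of_real (Hr a t) * exp (- w * of_real (Afun a t)))"
    by simp
  moreover have "of_real ((a n)^2) * exp (of_real t + w) ^ n * (exp (- w * of_real (Afun a t)) / of_real (Hr a t))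
      = of_real (Hr_weight a t n) * exp (w * of_real (real n - Afun a t))" for n
  proof -
    have "exp (w * of_real (real n - Afun a t)) = exp w ^ n * exp (- w * of_real (Afun a t))"
      by (simp add: right_diff_distrib exp_diff exp_minus exp_of_nat2_mult field_simps)
    then show ?thesis
      by (simp add: Hr_weight_def exp_add power_mult_distrib exp_of_real)
  qed
  ultimately show ?thesis by simp
qed

lemma Hc_of_real: "Hc a (of_real t) = of_real (Hr a t)"
proof -
  have "(\<lambda>n. of_real ((a n)^2 * exp t ^ n)) sums (of_real (Hr a t) :: complex)"
    unfolding Hr_def Gr_def by (intro sums_of_real summable_sums summable_real_powser)
  then show ?thesis
    by (simp add: Hc_def Gc_def sums_iff exp_of_real)
qed

lemma Hc_holomorphic: "Hc a holomorphic_on S"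
proof -
  have "Gc a holomorphic_on UNIV"
    unfolding holomorphic_on_def field_differentiable_def Gc_def[abs_def]
    using termdiffs_strong_converges_everywhere[OF entire] has_field_derivative_at_within by blast
  then have "(Gc a \<circ> exp) holomorphic_on S"
    using holomorphic_on_compose[of exp S "Gc a"] holomorphic_on_exp holomorphic_on_subset by blast
  then show ?thesis
    by (simp add: Hc_def[abs_def] o_def)
qed

lemma Hr_ratio_le:
  assumes B_le: "\<And>\<xi>. \<bar>\<xi>\<bar> \<le> \<bar>s\<bar> \<Longrightarrow> Bfun a (t + \<xi>) \<le> M"
  shows "Hr a (t + s) / Hr a t * exp (- s * Afun a t) \<le> exp (M * s^2 / 2)"
proof -
  define D where "D m = (if m = 0 then (\<lambda>x. ln (Hr a (t + x)))
    else if m = 1 then (\<lambda>x. Afun a (t + x)) else (\<lambda>x. Bfun a (t + x)))" for m :: nat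
  have shift: "((\<lambda>x. f (t + x)) has_real_derivative f' (t + x)) (at x)"
    if "\<And>y. (f has_real_derivative f' y) (at y)" for f f' x
    using that[of "t + x"] DERIV_shift[of f "f' (t + x)" x t] by (simp add: add.commute)
  have "\<forall>m x. m < 2 \<and> \<bar>x\<bar> \<le> \<bar>s\<bar> \<longrightarrow> (D m has_real_derivative D (Suc m) x) (at x)"
    using shift[OF has_real_derivative_ln_Hr] shift[OF has_real_derivative_Afun]
    by (auto simp: D_def less_2_cases_iff)
  then obtain \<xi> where \<xi>: "\<bar>\<xi>\<bar> \<le> \<bar>s\<bar>"
    and "ln (Hr a (t + s)) = (\<Sum>m<2. D m 0 / fact m * s ^ m) + D 2 \<xi> / fact 2 * s ^ 2"
    using Maclaurin_bi_le[of D "\<lambda>x. ln (Hr a (t + x))" 2 s] by (auto simp: D_def)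
  then have "ln (Hr a (t + s)) - ln (Hr a t) - s * Afun a t = Bfun a (t + \<xi>) * s^2 / 2"
    by (simp add: D_def numeral_2_eq_2)
  also have "\<dots> \<le> M * s^2 / 2"
    using B_le[OF \<xi>] by (simp add: mult_right_mono divide_right_mono)
  finally have "exp (ln (Hr a (t + s)) - ln (Hr a t) - s * Afun a t) \<le> exp (M * s^2 / 2)"
    by simp
  moreover have "exp (ln (Hr a (t + s)) - ln (Hr a t) - s * Afun a t)
      = Hr a (t + s) / Hr a t * exp (- s * Afun a t)"
    using Hr_pos[of t] Hr_pos[of "t + s"] by (simp add: exp_diff exp_minus divide_inverse)
  ultimately show ?thesis by simp
qed

lemma Hc_ratio_quadratic_approx:
  assumes B_pos: "0 < Bfun a t"
    and window: "\<And>\<xi>. \<bar>\<xi>\<bar> \<le> 1 / sqrt (Bfun a t) \<Longrightarrow> Bfun a (t + \<xi>) \<le> M * Bfun a t"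
    and w: "cmod w * sqrt (Bfun a t) \<le> \<eta>" and \<eta>: "\<eta> \<le> 1/2"
  shows "norm (Hc a (of_real t + w) / of_real (Hr a t) * exp (- w * of_real (Afun a t)) - 1
      - w^2 * of_real (Bfun a t) / 2) \<le> 432 * exp (M / 2) * \<eta> * ((cmod w)^2 * Bfun a t)"
proof -
  define \<sigma> where "\<sigma> = sqrt (Bfun a t)"
  have \<sigma>: "0 < \<sigma>" "\<sigma>^2 = Bfun a t"
    using B_pos by (auto simp: \<sigma>_def)
  let ?y = "\<lambda>n. real n - Afun a t"
  have mgf_le: "Hr a (t + s) / Hr a t * exp (- s * Afun a t) \<le> exp (M / 2)" if s: "\<bar>s\<bar> = 1 / \<sigma>" for s
  proof -
    have "\<And>\<xi>. \<bar>\<xi>\<bar> \<le> \<bar>s\<bar> \<Longrightarrow> Bfun a (t + \<xi>) \<le> M * Bfun a t"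
      using window s by (simp add: \<sigma>_def)
    then have "Hr a (t + s) / Hr a t * exp (- s * Afun a t) \<le> exp (M * Bfun a t * s^2 / 2)"
      by (rule Hr_ratio_le)
    moreover have "s^2 = (1 / \<sigma>)^2"
      using s by (metis power2_abs)
    ultimately show ?thesis
      using \<sigma> B_pos by (simp add: power_divide)
  qed
  have plus: "(\<lambda>n. Hr_weight a t n * exp (?y n / \<sigma>))
      sums (Hr a (t + 1 / \<sigma>) / Hr a t * exp (- (1 / \<sigma>) * Afun a t))"
    using sums_Hr_weight_exp_centered[of t "1 / \<sigma>"] by simp
  have minus: "(\<lambda>n. Hr_weight a t n * exp (- (?y n / \<sigma>)))
      sums (Hr a (t + - (1 / \<sigma>)) / Hr a t * exp (- (- (1 / \<sigma>)) * Afun a t))"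
    using sums_Hr_weight_exp_centered[of t "- (1 / \<sigma>)"] by simp
  have abs_exp_le: "(\<Sum>n. Hr_weight a t n * exp \<bar>?y n / \<sigma>\<bar>) \<le> 2 * exp (M / 2)"
    using summable_exp_abs_le(2)[OF Hr_weight_nonneg plus minus]
      mgf_le[of "1 / \<sigma>"] mgf_le[of "- (1 / \<sigma>)"] \<sigma>(1)
    by simp
  have variance: "(\<lambda>n. Hr_weight a t n * (?y n)^2) sums \<sigma>^2"
    using sums_Hr_weight_variance \<sigma>(2) by simp
  have "cmod w * \<sigma> \<le> \<eta>"
    using w by (simp add: \<sigma>_def)
  from norm_mgf_sub_quadratic_le[OF Hr_weight_nonneg sums_Hr_weight sums_Hr_weight_centered
      variance sums_Hr_weight_cexp_centered summable_exp_abs_le(1)[OF Hr_weight_nonneg plus minus]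
      abs_exp_le \<sigma>(1) this \<eta>]
  show ?thesis
    using \<sigma>(2) by (simp add: power_mult_distrib)
qed

lemma Hc_local_log_expansion:
  assumes B_pos: "0 < Bfun a t"
    and window: "\<And>\<xi>. \<bar>\<xi>\<bar> \<le> 1 / sqrt (Bfun a t) \<Longrightarrow> Bfun a (t + \<xi>) \<le> M * Bfun a t"
    and \<eta>: "0 < \<eta>" "\<eta> \<le> 1/2" "432 * exp (M / 2) * \<eta> \<le> 1/2"
    and \<epsilon>: "(432 * exp (M / 2) + 1) * \<eta> \<le> \<epsilon>"
  shows "log_expansion_at a \<epsilon> \<eta> t"
proof -
  let ?A = "complex_of_real (Afun a t)" and ?B = "Bfun a t" and ?S = "cball 0 (\<eta> / sqrt (Bfun a t))"
  define \<phi> where "\<phi> w = Hc a (of_real t + w) / of_real (Hr a t) * exp (- w * ?A)" for w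
  define L where "L w = w * ?A + Ln (\<phi> w)" for w
  have log_approx: "0 < Re (\<phi> w) \<and>
      norm (Ln (\<phi> w) - w^2 * of_real ?B / 2) \<le> \<epsilon> * ((cmod w)^2 * ?B)" if "w \<in> ?S" for w
  proof -
    have w: "cmod w * sqrt ?B \<le> \<eta>"
      using that B_pos by (simp add: field_simps)
    then have "(cmod w * sqrt ?B)^2 \<le> \<eta>^2"
      using B_pos by (intro power_mono) auto
    then have q: "(cmod w)^2 * ?B \<le> \<eta>^2"
      using B_pos by (simp add: power_mult_distrib)
    have D: "norm (w^2 * of_real ?B / 2) \<le> (cmod w)^2 * ?B / 2"
      using B_pos by (simp add: norm_mult norm_power)
    note Ln_bound = norm_Ln_sub_le[OF Hc_ratio_quadratic_approx[OF B_pos window w \<eta>(2)] D \<eta>(3) q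
        less_imp_le[OF \<eta>(1)] \<eta>(2), folded \<phi>_def]
    have "(432 * exp (M / 2) * \<eta> + \<eta>) * ((cmod w)^2 * ?B) \<le> \<epsilon> * ((cmod w)^2 * ?B)"
      using \<epsilon> B_pos by (intro mult_right_mono) (auto simp: algebra_simps)
    with Ln_bound show ?thesis by simp
  qed
  have "(Hc a \<circ> (\<lambda>w. of_real t + w)) holomorphic_on ?S"
    by (rule holomorphic_on_compose[OF _ Hc_holomorphic]) (intro holomorphic_intros)
  then have \<phi>_holomorphic: "\<phi> holomorphic_on ?S"
    using Hr_pos[of t] unfolding \<phi>_def[abs_def] o_def by (intro holomorphic_intros) auto
  have \<phi>_not_nonpos: "\<phi> w \<notin> \<real>\<^sub>\<le>\<^sub>0" if "w \<in> ?S" for w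
    using log_approx[OF that] by (auto simp: complex_nonpos_Reals_iff)
  have "L holomorphic_on ?S"
    unfolding L_def[abs_def] by (intro holomorphic_intros \<phi>_not_nonpos \<phi>_holomorphic)
  moreover have "L 0 = 0"
    using Hr_pos[of t] by (simp add: L_def \<phi>_def Hc_of_real)
  moreover have "exp (L w) = Hc a (of_real t + w) / Hc a (of_real t)" if "w \<in> ?S" for w
  proof -
    have "\<phi> w \<noteq> 0"
      using \<phi>_not_nonpos[OF that] by auto
    then have "exp (L w) = exp (w * ?A) * \<phi> w"
      by (simp add: L_def exp_add)
    then show ?thesis
      using Hr_pos[of t] by (simp add: \<phi>_def Hc_of_real exp_minus field_simps)
  qed
  moreover have "cmod (L w - (w * ?A + w^2 * of_real ?B / 2)) \<le> \<epsilon> * (cmod w)^2 * ?B"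
    if "w \<in> ?S" for w
  proof -
    have "L w - (w * ?A + w^2 * of_real ?B / 2) = Ln (\<phi> w) - w^2 * of_real ?B / 2"
      by (simp add: L_def)
    then show ?thesis
      using log_approx[OF that] by (simp only: mult.assoc)
  qed
  ultimately show ?thesis
    unfolding log_expansion_at_def by blast
qed

end

lemma normal_value_window:
  assumes B_mono: "mono (Bfun a)"
    and ts_choice: "\<And>l. l \<in> admissible_indices a \<Longrightarrow> Bfun a (ts l) = real l ^ 6"
    and t: "t \<in> normal_values a ts"
  shows "1 \<le> Bfun a t"
    and "\<And>\<xi>. \<bar>\<xi>\<bar> \<le> 1 / sqrt (Bfun a t) \<Longrightarrow> Bfun a (t + \<xi>) \<le> 64 * Bfun a t"
proof -
  from t obtain l where l: "l \<in> admissible_indices a" "Suc l \<in> admissible_indices a"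
      "ts l + 2 / (real l)^2 \<le> t" "t \<le> ts (Suc l) - 2 / (real l)^2"
    unfolding normal_values_def by auto
  have l_pos: "1 \<le> real l"
    using l(1) by (simp add: admissible_indices_def)
  have "0 \<le> 2 / (real l)^2"
    by simp
  then have "Bfun a (ts l) \<le> Bfun a t"
    using l(3) by (intro monoD[OF B_mono]) linarith
  then have B_ge: "real l ^ 6 \<le> Bfun a t"
    using ts_choice[OF l(1)] by simp
  then show B_ge_1: "1 \<le> Bfun a t"
    using one_le_power[OF l_pos, of 6] by linarith
  fix \<xi> assume \<xi>: "\<bar>\<xi>\<bar> \<le> 1 / sqrt (Bfun a t)"
  have "real l ^ 3 \<le> sqrt (Bfun a t)"
    using B_ge by (intro real_le_rsqrt) (simp flip: power_mult)
  then have "1 / sqrt (Bfun a t) \<le> 1 / real l ^ 3"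
    using l_pos B_ge_1 by (intro divide_left_mono mult_pos_pos) auto
  also have "\<dots> \<le> 2 / (real l)^2"
    using l_pos by (simp add: field_simps power3_eq_cube power2_eq_square)
  finally have "t + \<xi> \<le> ts (Suc l)"
    using \<xi> l(4) by linarith
  then have "Bfun a (t + \<xi>) \<le> Bfun a (ts (Suc l))"
    by (rule monoD[OF B_mono])
  also have "\<dots> = (real l + 1) ^ 6"
    using ts_choice[OF l(2)] by (simp add: add.commute)
  also have "\<dots> \<le> (2 * real l) ^ 6"
    using l_pos by (intro power_mono) auto
  also have "\<dots> \<le> 64 * Bfun a t"
    using B_ge by (simp add: power_mult_distrib)
  finally show "Bfun a (t + \<xi>) \<le> 64 * Bfun a t" .
qed

theorem proposition3p9:
  fixes a :: "nat \<Rightarrow> real" and ts :: "nat \<Rightarrow> real"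
  assumes nonneg: "\<And>n. a n \<ge> 0"
    and inf_nz: "infinite {n. a n \<noteq> 0}"
    and entire: "\<And>z::complex. summable (\<lambda>n. complex_of_real ((a n)^2) * z ^ n)"
    and B_mono: "mono (Bfun a)"
    and B_unbdd: "\<not> bdd_above (range (Bfun a))"
    and ts_choice: "\<And>l. l \<in> admissible_indices a \<Longrightarrow> Bfun a (ts l) = real l ^ 6"
  shows "\<forall>\<epsilon>>0. \<exists>\<eta>>0. \<exists>t0. \<forall>t \<in> normal_values a ts. t > t0 \<longrightarrow>
    (\<exists>L. L holomorphic_on cball 0 (\<eta> / sqrt (Bfun a t)) \<and> L 0 = 0 \<and>
      (\<forall>w \<in> cball 0 (\<eta> / sqrt (Bfun a t)).
         exp (L w) = Hc a (complex_of_real t + w) / Hc a (complex_of_real t) \<and>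
         cmod (L w - (w * complex_of_real (Afun a t) + w^2 * complex_of_real (Bfun a t) / 2))
           \<le> \<epsilon> * (cmod w)^2 * Bfun a t))"
proof -
  have "{n. a n \<noteq> 0} \<noteq> {}"
    using inf_nz by (intro notI) simp
  then interpret entire_square_series a
    using entire by unfold_locales auto
  have "\<exists>\<eta>>0. \<forall>t \<in> normal_values a ts. log_expansion_at a \<epsilon> \<eta> t" if "0 < \<epsilon>" for \<epsilon>
  proof -
    define C where "C = 432 * exp (64 / 2 :: real)"
    define \<eta> where "\<eta> = min (1/2) (min (1 / (2 * C)) (\<epsilon> / (C + 1)))"
    have "0 < C" by (simp add: C_def)
    then have \<eta>_pos: "0 < \<eta>"
      using that by (simp add: \<eta>_def)
    have \<eta>_le: "\<eta> \<le> 1/2" "\<eta> \<le> 1 / (2 * C)" "\<eta> \<le> \<epsilon> / (C + 1)"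
      unfolding \<eta>_def by linarith+
    then have "C * \<eta> \<le> 1/2" "(C + 1) * \<eta> \<le> \<epsilon>"
      using mult_left_mono[OF \<eta>_le(2), of C] mult_left_mono[OF \<eta>_le(3), of "C + 1"] \<open>0 < C\<close>
      by simp_all
    then have "log_expansion_at a \<epsilon> \<eta> t" if "t \<in> normal_values a ts" for t
      using normal_value_window[OF B_mono ts_choice that] \<eta>_pos \<eta>_le(1) unfolding C_def
      by (intro Hc_local_log_expansion[where M = 64]) auto
    with \<eta>_pos show ?thesis by blast
  qed
  (* Any t0 will do: the estimate holds on all of X. *)
  then have "\<forall>\<epsilon>>0. \<exists>\<eta>>0. \<exists>t0. \<forall>t \<in> normal_values a ts. t > t0 \<longrightarrow> log_expansion_at a \<epsilon> \<eta> t"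
    by blast
  then show ?thesis
    by (simp only: log_expansion_at_def)
qed

end
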